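(* Let $G$ be a commutative group, $g\in\mathrm{Aut}(G)$ with $g\ne\mathrm{id}$, and $t\in G$. Let $f$ be the bijection of $G$ given by $f(x)=g(x)t$. Then $Z(G(f))=Z(G(g))$ as sets, and $Z(G(g))=\{x\in G:\ g(x)=x\}$.
   Context: The center $Z(Q)$ of a loop $Q$ is the set of elements that commute with all elements and lie in the left, middle and right nuclei (i.e., associate in every position). Construction $G(f)$: for a commutative group $G$ (written multiplicatively) and a bijection $f:G\to G$, let $\overline{G}=\{\overline{x}:x\in G\}$ be a disjoint copy of $G$, and let $G(f)$ be $G\cup\overline{G}$ with multiplication $x*y=xy$, $x*\overline{y}=\overline{xy}$, $\overline{x}*y=\overline{xy}$, $\overline{x}*\overline{y}=f(xy)$ for $x,y\in G$. *)

theory Defs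
  imports Main
begin

text \<open>The commutative group G is a type of class ab_group_add; the group operation
 (written multiplicatively in the paper) is written additively as +.
 Elements of G(f) are pairs (x, b): (x, False) stands for x and (x, True) for overline x.\<close>

definition Gf_mult :: "('a::ab_group_add \<Rightarrow> 'a) \<Rightarrow> 'a \<times> bool \<Rightarrow> 'a \<times> bool \<Rightarrow> 'a \<times> bool" where
  "Gf_mult f p q =
     (case p of (x, bx) \<Rightarrow> case q of (y, by) \<Rightarrow>
        if bx \<and> by then (f (x + y), False) else (x + y, bx \<noteq> by))"

definition magma_center :: "('q \<Rightarrow> 'q \<Rightarrow> 'q) \<Rightarrow> 'q set" where
  "magma_center m = {a. \<forall>x y.
      m a x = m x a \<and>
      m (m a x) y = m a (m x y) \<and>
      m (m x a) y = m x (m a y) \<and>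
      m (m x y) a = m x (m y a)}"

definition is_aut :: "('a::ab_group_add \<Rightarrow> 'a) \<Rightarrow> bool" where
  "is_aut g \<longleftrightarrow> bij g \<and> (\<forall>x y. g (x + y) = g x + g y)"

end

theory Submission
  imports Defs
begin

(* For an arbitrary map h on the commutative group G, call a plain element x
   equivariant if h (x + s) = x + h s for all s.  Multiplication by such an x is the
   shift (y, b) \<mapsto> (x + y, b), and this shift commutes with both arguments of the
   multiplication of G(h); hence every equivariant plain x is central.  Conversely, one
   associativity instance, (a * 0bar) * sbar = a * (0bar * sbar), forces a central
   element a to be plain and equivariant, unless h is a translation v \<mapsto> v + c.
   So for every h that is not a translation the center of G(h) consists of the
   equivariant plain elements (center_Gf_mult).
   For h = g + d with g an automorphism, h is a translation only if g = id, and x is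
   equivariant exactly when g x = x.  Applying this with d = t (giving f) and with d = 0
   (giving g itself) yields both claims of lemma3p1. *)

definition equivariant :: "('a::ab_group_add \<Rightarrow> 'a) \<Rightarrow> 'a \<Rightarrow> bool" where
  "equivariant h x \<longleftrightarrow> (\<forall>s. h (x + s) = x + h s)"

text \<open>Maps of the form v \<mapsto> v + c; exactly for these the center characterization fails.\<close>
definition translation :: "('a::ab_group_add \<Rightarrow> 'a) \<Rightarrow> bool" where
  "translation h \<longleftrightarrow> (\<exists>c. \<forall>v. h v = v + c)"

definition shift :: "'a::ab_group_add \<Rightarrow> 'a \<times> bool \<Rightarrow> 'a \<times> bool" where
  "shift x q = (x + fst q, snd q)"

lemma Gf_mult_plain_left: "Gf_mult h (x, False) q = shift x q"
  by (cases q) (simp add: Gf_mult_def shift_def)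

lemma Gf_mult_plain_right: "Gf_mult h q (x, False) = shift x q"
  by (cases q) (simp add: Gf_mult_def shift_def add.commute)

lemma Gf_mult_shift_left:
  assumes "equivariant h x"
  shows "Gf_mult h (shift x p) q = shift x (Gf_mult h p q)"
  using assms by (cases p, cases q) (simp add: Gf_mult_def shift_def equivariant_def add.assoc)

lemma Gf_mult_shift_right:
  assumes "equivariant h x"
  shows "Gf_mult h p (shift x q) = shift x (Gf_mult h p q)"
proof -
  have "h (y + (x + z)) = x + h (y + z)" for y z
    using assms by (simp add: equivariant_def add.left_commute[of y x z])
  then show ?thesis by (cases p, cases q) (simp add: Gf_mult_def shift_def add.left_commute)
qed

lemma equivariant_in_center:
  assumes "equivariant h x"
  shows "(x, False) \<in> magma_center (Gf_mult h)"
  unfolding magma_center_def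
  by (simp add: Gf_mult_plain_left Gf_mult_plain_right
      Gf_mult_shift_left[OF assms] Gf_mult_shift_right[OF assms])

text \<open>Necessity: the instance (a * 0bar) * sbar = a * (0bar * sbar) of left-nucleus
  membership shows that a central (x, b) with b = True makes h a translation, and with
  b = False makes x equivariant.\<close>
lemma center_plain_equivariant:
  assumes "(x, b) \<in> magma_center (Gf_mult h)" and "\<not> translation h"
  shows "\<not> b \<and> equivariant h x"
proof -
  have assoc: "\<And>s. Gf_mult h (Gf_mult h (x, b) (0, True)) (s, True)
                  = Gf_mult h (x, b) (Gf_mult h (0, True) (s, True))"
    using assms(1) unfolding magma_center_def by blast
  show ?thesis
  proof (cases b)
    case True
    have "\<forall>v. h v = v + (h x - x)"
    proof
      fix v
      have "h x + v = x + h v" using assoc[of v] True by (simp add: Gf_mult_def)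
      then show "h v = v + (h x - x)" by (simp add: algebra_simps)
    qed
    with assms(2) show ?thesis unfolding translation_def by blast
  next
    case False
    then show ?thesis using assoc by (simp add: Gf_mult_def equivariant_def)
  qed
qed

lemma center_Gf_mult:
  assumes "\<not> translation h"
  shows "magma_center (Gf_mult h) = {(x, False) | x. equivariant h x}"
proof (intro equalityI subsetI)
  fix a assume "a \<in> magma_center (Gf_mult h)"
  then show "a \<in> {(x, False) | x. equivariant h x}"
    using center_plain_equivariant[OF _ assms] by (cases a) blast
qed (auto intro: equivariant_in_center)

lemma affine_not_translation:
  assumes "is_aut g" and "g \<noteq> id"
  shows "\<not> translation (\<lambda>v. g v + d)"
proof
  assume "translation (\<lambda>v. g v + d)"
  then obtain c where c: "\<And>v. g v + d = v + c" unfolding translation_def by blast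
  have "g 0 = 0" using assms(1) unfolding is_aut_def by (metis add_cancel_right_right)
  then have "c = d" using c[of 0] by simp
  then have "g = id" using c by (auto simp: fun_eq_iff)
  with assms(2) show False by simp
qed

lemma affine_equivariant_iff:
  assumes "is_aut g"
  shows "equivariant (\<lambda>v. g v + d) x \<longleftrightarrow> g x = x"
  using assms by (simp add: equivariant_def is_aut_def algebra_simps)

lemma center_affine:
  assumes "is_aut g" and "g \<noteq> id"
  shows "magma_center (Gf_mult (\<lambda>v. g v + d)) = {(x, False) | x. g x = x}"
  using center_Gf_mult[OF affine_not_translation[OF assms]] affine_equivariant_iff[OF assms(1)]
  by simp

theorem lemma3p1:
  fixes g :: "'a::ab_group_add \<Rightarrow> 'a" and t :: 'a and f :: "'a \<Rightarrow> 'a"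
  assumes "is_aut g" and "g \<noteq> id" and "f = (\<lambda>x. g x + t)"
  shows "magma_center (Gf_mult f) = magma_center (Gf_mult g) \<and>
         magma_center (Gf_mult g) = {(x, False) | x. g x = x}"
proof -
  have center_f: "magma_center (Gf_mult f) = {(x, False) | x. g x = x}"
    using center_affine[OF assms(1,2), of t] assms(3) by simp
  have center_g: "magma_center (Gf_mult g) = {(x, False) | x. g x = x}"
    using center_affine[OF assms(1,2), of 0] by simp
  show ?thesis using center_f center_g by simp
qed

end
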